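(* Let $L\ge 6$ be even and let $0\le\ell_1,\ell_2\le L$ be integers. The perimeter of the rhombus $\mathcal{R}_{\ell_1,\ell_2}$ (with any reference site) on the $L\times L$ toric grid graph satisfies $$P(\mathcal{R}_{\ell_1,\ell_2})=4\times\begin{cases}\ell_1+\ell_2+1 & \text{if } \min\{\ell_1,\ell_2\}<L/2 \text{ and } \max\{\ell_1,\ell_2\}<L,\\ 2L-(\ell_1+\ell_2+1) & \text{if } \min\{\ell_1,\ell_2\}\ge L/2 \text{ and } \max\{\ell_1,\ell_2\}<L,\\ L & \text{if } \min\{\ell_1,\ell_2\}<L/2 \text{ and } \max\{\ell_1,\ell_2\}=L,\\ 0 & \text{if } \min\{\ell_1,\ell_2\}\ge L/2 \text{ and } \max\{\ell_1,\ell_2\}=L.\end{cases}$$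
   Context: $L\ge 6$ is even and $\Lambda=(V,E)$ is the $L\times L$ toric grid graph: $V=\{0,\dots,L-1\}^2$, two sites adjacent iff they differ by $\pm1$ mod $L$ in exactly one coordinate; coordinates are taken mod $L$. Sites are even/odd according to the parity of the coordinate sum; $V_{\mathrm{e}},V_{\mathrm{o}}$ denote even/odd sites. For $S\subseteq V$, $\partial^+S$ is the set of sites outside $S$ adjacent to $S$, and $\nabla S$ is the set of edges joining a site of $S$ to a site of $\partial^+ S$; the perimeter of $S$ is $P(S)=|\nabla S|$. Rhombi: for $\eta=(\eta_1,\eta_2)\in V_{\mathrm{o}}$ and positive $\ell_1,\ell_2\le L$, $\mathcal{R}_{\ell_1,\ell_2}(\eta)=S\cup\partial^+S$ with $S=\{(\eta_1+k+j,\eta_2+k-j):0\le k\le\ell_1-1,\ 0\le j\le \ell_2-1\}$. Degenerate rhombi (when $\ell_1\ell_2=0$) have a reference site $\eta\in V_{\mathrm{e}}$ and are sets of even sites: $\mathcal{R}_{0,\ell_2}(\eta)=\{(\eta_1+j,\eta_2-j):0\le j\le \ell_2\}$ for $\ell_2\neq0$, $\mathcal{R}_{\ell_1,0}(\eta)=\{(\eta_1+k,\eta_2+k):0\le k\le\ell_1\}$ for $\ell_1\ne0$, and $\mathcal{R}_{0,0}(\eta)=\{\eta\}$. *)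

theory Defs
  imports Main
begin

type_synonym site = "int \<times> int"

definition sites :: "nat \<Rightarrow> site set" where
  "sites L = {0..<int L} \<times> {0..<int L}"

definition wrap :: "nat \<Rightarrow> site \<Rightarrow> site" where
  "wrap L p = (fst p mod int L, snd p mod int L)"

definition adj :: "nat \<Rightarrow> site \<Rightarrow> site \<Rightarrow> bool" where
  "adj L x y \<longleftrightarrow> x \<in> sites L \<and> y \<in> sites L \<and>
     ((fst x = fst y \<and> ((snd x - snd y) mod int L = 1 \<or> (snd y - snd x) mod int L = 1)) \<or>
      (snd x = snd y \<and> ((fst x - fst y) mod int L = 1 \<or> (fst y - fst x) mod int L = 1)))"

definition even_site :: "site \<Rightarrow> bool" where
  "even_site p \<longleftrightarrow> even (fst p + snd p)"

definition odd_site :: "site \<Rightarrow> bool" where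
  "odd_site p \<longleftrightarrow> odd (fst p + snd p)"

definition obdry :: "nat \<Rightarrow> site set \<Rightarrow> site set" where
  "obdry L S = {y \<in> sites L. y \<notin> S \<and> (\<exists>x\<in>S. adj L x y)}"

definition edge_bdry :: "nat \<Rightarrow> site set \<Rightarrow> (site \<times> site) set" where
  "edge_bdry L S = {(x, y). x \<in> S \<and> y \<in> obdry L S \<and> adj L x y}"

definition perimeter :: "nat \<Rightarrow> site set \<Rightarrow> nat" where
  "perimeter L S = card (edge_bdry L S)"

definition rhombus :: "nat \<Rightarrow> nat \<Rightarrow> nat \<Rightarrow> site \<Rightarrow> site set" where
  "rhombus L l1 l2 \<eta> =
    (if l1 = 0 \<and> l2 = 0 then {wrap L \<eta>}
     else if l1 = 0 then {wrap L (fst \<eta> + int j, snd \<eta> - int j) | j. j \<le> l2}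
     else if l2 = 0 then {wrap L (fst \<eta> + int k, snd \<eta> + int k) | k. k \<le> l1}
     else (let S = {wrap L (fst \<eta> + int k + int j, snd \<eta> + int k - int j) | k j. k < l1 \<and> j < l2}
           in S \<union> obdry L S))"

end

theory Submission
  imports Defs
begin

(* In the rotated coordinates (k, j) |-> eta + k (1, 1) + j (1, -1) the core S of a rhombus is
   the image of an l1 x l2 box and its outer boundary is the image of an (l1 + 1) x (l2 + 1) box
   based at eta - (1, 0); a degenerate rhombus is the image of a box of width 1.  All these sets
   are monochromatic, so every neighbour of a site lies outside the set: a monochromatic set R has
   perimeter 4 |R|, and double counting the edges between S and its boundary T gives
   P(S \<union> T) = 4 |T| - 4 |S|.  Finally, the image of an m x n box (m, n \<le> L) has
   m n - 2 (m - L/2)+ (n - L/2)+ sites, because wrapping around the torus identifies a point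
   (k, j) with (k + L/2, j \<plusminus> L/2); comparing this count for the two boxes gives the four cases. *)

section \<open>Neighbours on the torus\<close>

definition neighbours :: "nat \<Rightarrow> site \<Rightarrow> site set" where
  "neighbours L x = {wrap L (fst x + 1, snd x), wrap L (fst x - 1, snd x),
                     wrap L (fst x, snd x + 1), wrap L (fst x, snd x - 1)}"

lemma wrap_in_sites: "0 < L \<Longrightarrow> wrap L p \<in> sites L"
  by (simp add: wrap_def sites_def)

lemma wrap_eq_iff: "wrap L p = wrap L q \<longleftrightarrow> int L dvd fst p - fst q \<and> int L dvd snd p - snd q"
  by (simp add: wrap_def prod_eq_iff mod_eq_dvd_iff)

lemma neighbours_subset_sites: "0 < L \<Longrightarrow> neighbours L x \<subseteq> sites L"
  by (simp add: neighbours_def wrap_in_sites)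

lemma mod_diff_eq_1_iff:
  fixes a c L :: int
  assumes "0 \<le> c" "c < L" "1 < L"
  shows "(c - a) mod L = 1 \<longleftrightarrow> c = (a + 1) mod L"
    and "(a - c) mod L = 1 \<longleftrightarrow> c = (a - 1) mod L"
proof -
  have shift: "c = (a + d) mod L \<longleftrightarrow> L dvd c - a - d" for d
    using assms by (metis mod_eq_dvd_iff mod_pos_pos_trivial diff_diff_eq)
  have one: "e mod L = 1 \<longleftrightarrow> L dvd e - 1" for e
    using assms by (metis mod_eq_dvd_iff mod_pos_pos_trivial zero_le_one)
  show "(c - a) mod L = 1 \<longleftrightarrow> c = (a + 1) mod L"
    unfolding one shift by (simp add: algebra_simps)
  have "L dvd a - c - 1 \<longleftrightarrow> L dvd c - a - (- 1)"
    by (metis dvd_minus_iff minus_diff_eq diff_minus_eq_add add.commute)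
  then show "(a - c) mod L = 1 \<longleftrightarrow> c = (a - 1) mod L"
    unfolding one using shift[of "- 1"] by simp
qed

lemma adj_iff_mem_neighbours:
  assumes "x \<in> sites L" "3 \<le> L"
  shows "adj L x y \<longleftrightarrow> y \<in> neighbours L x"
proof -
  have L: "1 < int L" using assms(2) by simp
  have "y \<in> sites L" if "y \<in> neighbours L x"
    using that neighbours_subset_sites[of L x] assms(2) by auto
  then show ?thesis
    using assms(1) mod_diff_eq_1_iff[OF _ _ L]
    by (cases x; cases y) (auto simp: adj_def neighbours_def wrap_def sites_def)
qed

lemma neighbours_sym:
  assumes "x \<in> sites L" "y \<in> sites L" "3 \<le> L"
  shows "x \<in> neighbours L y \<longleftrightarrow> y \<in> neighbours L x"
  using assms adj_iff_mem_neighbours[of x L y] adj_iff_mem_neighbours[of y L x]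
  by (auto simp: adj_def)

lemma card_neighbours:
  assumes "x \<in> sites L" "3 \<le> L"
  shows "card (neighbours L x) = 4"
proof -
  let ?offsets = "{(1, 0), (- 1, 0), (0, 1), (0, - 1)} :: site set"
  have "\<not> int L dvd d" if "d \<noteq> 0" "\<bar>d\<bar> \<le> 2" for d
    using that assms(2) dvd_imp_le_int[of d "int L"] by auto
  from this[of 1] this[of 2] this[of "- 1"] this[of "- 2"]
  have "inj_on (\<lambda>d. wrap L (fst x + fst d, snd x + snd d)) ?offsets"
    by (auto simp: inj_on_def wrap_eq_iff)
  moreover have "neighbours L x = (\<lambda>d. wrap L (fst x + fst d, snd x + snd d)) ` ?offsets"
    by (simp add: neighbours_def)
  ultimately show ?thesis by (simp add: card_image)
qed

lemma even_site_wrap: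
  assumes "even L"
  shows "even_site (wrap L p) \<longleftrightarrow> even_site p"
proof -
  have "2 dvd int L" using assms by simp
  then have "even (a mod int L) \<longleftrightarrow> even a" for a :: int
    by (simp add: even_iff_mod_2_eq_zero mod_mod_cancel)
  then show ?thesis
    unfolding even_site_def wrap_def by simp
qed

lemma even_site_neighbour:
  assumes "even L" "y \<in> neighbours L x"
  shows "even_site y \<longleftrightarrow> \<not> even_site x"
  using assms(2) unfolding neighbours_def
  by (auto simp: even_site_wrap[OF assms(1)]) (auto simp: even_site_def)

lemma finite_sites: "finite (sites L)"
  by (simp add: sites_def)

section \<open>Perimeter of monochromatic sets\<close>

definition monochromatic :: "site set \<Rightarrow> bool" where
  "monochromatic S \<longleftrightarrow> (\<forall>x\<in>S. \<forall>y\<in>S. even_site x = even_site y)"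

lemma neighbour_notin_monochromatic:
  "even L \<Longrightarrow> monochromatic S \<Longrightarrow> x \<in> S \<Longrightarrow> y \<in> neighbours L x \<Longrightarrow> y \<notin> S"
  by (metis monochromatic_def even_site_neighbour)

lemma obdry_monochromatic:
  assumes "even L" "3 \<le> L" "S \<subseteq> sites L" "monochromatic S"
  shows "obdry L S = (\<Union>x\<in>S. neighbours L x)"
proof (intro equalityI subsetI)
  fix y assume "y \<in> obdry L S"
  then obtain x where "x \<in> S" "adj L x y" by (auto simp: obdry_def)
  then show "y \<in> (\<Union>x\<in>S. neighbours L x)"
    using assms(2,3) adj_iff_mem_neighbours[of x L y] by auto
next
  fix y assume "y \<in> (\<Union>x\<in>S. neighbours L x)"
  then obtain x where x: "x \<in> S" "y \<in> neighbours L x" by auto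
  then have "adj L x y" "y \<in> sites L" "y \<notin> S"
    using assms adj_iff_mem_neighbours[of x L y] neighbours_subset_sites[of L x]
      neighbour_notin_monochromatic[OF assms(1,4)] by auto
  then show "y \<in> obdry L S" using x(1) by (auto simp: obdry_def)
qed

lemma edge_bdry_monochromatic:
  assumes "even L" "3 \<le> L" "S \<subseteq> sites L" "monochromatic S"
  shows "edge_bdry L S = Sigma S (neighbours L)"
  using assms(2,3) adj_iff_mem_neighbours[of _ L]
  by (auto simp: edge_bdry_def obdry_monochromatic[OF assms] subset_iff)

lemma sum_card_neighbours:
  assumes "3 \<le> L" "S \<subseteq> sites L"
  shows "(\<Sum>x\<in>S. card (neighbours L x)) = 4 * card S"
proof -
  have "(\<Sum>x\<in>S. card (neighbours L x)) = (\<Sum>x\<in>S. 4)"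
    using assms card_neighbours[of _ L] by (intro sum.cong) auto
  then show ?thesis by simp
qed

lemma perimeter_monochromatic:
  assumes "even L" "3 \<le> L" "S \<subseteq> sites L" "monochromatic S"
  shows "perimeter L S = 4 * card S"
proof -
  have "finite S" using assms(3) finite_sites finite_subset by blast
  then have "perimeter L S = (\<Sum>x\<in>S. card (neighbours L x))"
    by (simp add: perimeter_def edge_bdry_monochromatic[OF assms] neighbours_def)
  then show ?thesis using sum_card_neighbours[OF assms(2,3)] by simp
qed

lemma monochromatic_obdry:
  assumes "even L" "3 \<le> L" "S \<subseteq> sites L" "monochromatic S"
  shows "monochromatic (obdry L S)"
  using assms(4) even_site_neighbour[OF assms(1)]
  unfolding obdry_monochromatic[OF assms] monochromatic_def by blast

lemma sum_card_neighbours_Int_commute: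
  assumes "S \<subseteq> sites L" "T \<subseteq> sites L" "3 \<le> L"
  shows "(\<Sum>y\<in>T. card (neighbours L y \<inter> S)) = (\<Sum>x\<in>S. card (neighbours L x \<inter> T))"
proof -
  have fin: "finite S" "finite T" using assms finite_sites finite_subset by blast+
  have "(\<Sum>y\<in>T. card (neighbours L y \<inter> S)) = (\<Sum>y\<in>T. \<Sum>x\<in>S. of_bool (x \<in> neighbours L y))"
    using fin by (simp add: Int_def conj_commute)
  also have "\<dots> = (\<Sum>x\<in>S. \<Sum>y\<in>T. of_bool (x \<in> neighbours L y))"
    by (rule sum.swap)
  also have "\<dots> = (\<Sum>x\<in>S. \<Sum>y\<in>T. of_bool (y \<in> neighbours L x))"
    using assms neighbours_sym by (intro sum.cong refl) (auto simp: subset_iff)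
  also have "\<dots> = (\<Sum>x\<in>S. card (neighbours L x \<inter> T))"
    using fin by (simp add: Int_def conj_commute)
  finally show ?thesis .
qed

lemma edge_bdry_closure_monochromatic:
  assumes "even L" "3 \<le> L" "S \<subseteq> sites L" "monochromatic S"
  shows "edge_bdry L (S \<union> obdry L S) = Sigma (obdry L S) (\<lambda>y. neighbours L y - S)"
proof (intro equalityI subsetI)
  let ?T = "obdry L S"
  have T: "?T \<subseteq> sites L" "monochromatic ?T"
    using monochromatic_obdry[OF assms] by (auto simp: obdry_def)
  fix e assume "e \<in> Sigma ?T (\<lambda>y. neighbours L y - S)"
  then obtain x y where e: "e = (x, y)" "x \<in> ?T" "y \<in> neighbours L x" "y \<notin> S" by auto
  then have "adj L x y" "y \<in> sites L" "y \<notin> ?T"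
    using T assms(2) adj_iff_mem_neighbours[of x L y] neighbours_subset_sites[of L x]
      neighbour_notin_monochromatic[OF assms(1) T(2)] by auto
  then show "e \<in> edge_bdry L (S \<union> ?T)"
    using e by (auto simp: edge_bdry_def obdry_def)
next
  let ?T = "obdry L S"
  fix e assume "e \<in> edge_bdry L (S \<union> ?T)"
  then obtain x y where e: "e = (x, y)" "x \<in> S \<union> ?T" "adj L x y" "y \<in> obdry L (S \<union> ?T)"
    by (auto simp: edge_bdry_def)
  have "y \<notin> S \<union> ?T" using e(4) unfolding obdry_def[of L "S \<union> ?T"] by blast
  have "x \<in> sites L" using e(3) by (simp add: adj_def)
  then have "y \<in> neighbours L x" using e(3) assms(2) adj_iff_mem_neighbours by blast
  then have "x \<notin> S" using \<open>y \<notin> S \<union> ?T\<close> obdry_monochromatic[OF assms] by blast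
  then show "e \<in> Sigma ?T (\<lambda>y. neighbours L y - S)"
    using e \<open>y \<in> neighbours L x\<close> \<open>y \<notin> S \<union> ?T\<close> by auto
qed

lemma perimeter_closure_monochromatic:
  assumes "even L" "3 \<le> L" "S \<subseteq> sites L" "monochromatic S"
  shows "perimeter L (S \<union> obdry L S) + 4 * card S = 4 * card (obdry L S)"
proof -
  let ?T = "obdry L S"
  have T: "?T \<subseteq> sites L" "finite ?T"
    using finite_sites finite_subset by (auto simp: obdry_def)
  have "perimeter L (S \<union> ?T) = (\<Sum>y\<in>?T. card (neighbours L y - S))"
    using T by (simp add: perimeter_def edge_bdry_closure_monochromatic[OF assms] neighbours_def)
  moreover have "4 * card S = (\<Sum>y\<in>?T. card (neighbours L y \<inter> S))"
  proof -
    have "neighbours L x \<inter> ?T = neighbours L x" if "x \<in> S" for x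
      using that obdry_monochromatic[OF assms] by blast
    then have "(\<Sum>y\<in>?T. card (neighbours L y \<inter> S)) = (\<Sum>x\<in>S. card (neighbours L x))"
      using sum_card_neighbours_Int_commute[OF assms(3) T(1) assms(2)] by simp
    then show ?thesis using sum_card_neighbours[OF assms(2,3)] by simp
  qed
  ultimately have "perimeter L (S \<union> ?T) + 4 * card S
      = (\<Sum>y\<in>?T. card (neighbours L y \<inter> S) + card (neighbours L y - S))"
    by (simp add: sum.distrib)
  also have "\<dots> = (\<Sum>y\<in>?T. 4)"
    using T(1) assms(2) card_neighbours card_Int_Diff[of "neighbours L _"]
    by (intro sum.cong) (auto simp: neighbours_def)
  finally show ?thesis by simp
qed

section \<open>Diamonds\<close>

definition diag_site :: "nat \<Rightarrow> site \<Rightarrow> int \<times> int \<Rightarrow> site" where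
  "diag_site L \<eta> = (\<lambda>(k, j). wrap L (fst \<eta> + k + j, snd \<eta> + k - j))"

definition diamond :: "nat \<Rightarrow> site \<Rightarrow> nat \<Rightarrow> nat \<Rightarrow> site set" where
  "diamond L \<eta> m n = diag_site L \<eta> ` ({0..<int m} \<times> {0..<int n})"

lemma diag_site_eq_iff:
  "diag_site L \<eta> (k, j) = diag_site L \<eta> (k', j') \<longleftrightarrow>
     int L dvd (k + j) - (k' + j') \<and> int L dvd (k - j) - (k' - j')"
  by (simp add: diag_site_def wrap_eq_iff algebra_simps)

lemma diag_site_in_sites: "0 < L \<Longrightarrow> diag_site L \<eta> kj \<in> sites L"
  by (simp add: diag_site_def wrap_in_sites split: prod.split)

lemma diamond_subset_sites: "0 < L \<Longrightarrow> diamond L \<eta> m n \<subseteq> sites L"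
  by (auto simp: diamond_def diag_site_in_sites)

lemma even_site_diag_site:
  assumes "even L"
  shows "even_site (diag_site L \<eta> (k, j)) \<longleftrightarrow> even_site \<eta>"
proof -
  have "even_site (diag_site L \<eta> (k, j)) \<longleftrightarrow> even_site (fst \<eta> + k + j, snd \<eta> + k - j)"
    by (simp add: diag_site_def even_site_wrap[OF assms])
  also have "\<dots> \<longleftrightarrow> even (fst \<eta> + snd \<eta> + 2 * k)"
    by (simp add: even_site_def algebra_simps)
  finally show ?thesis by (simp add: even_site_def)
qed

lemma monochromatic_diamond: "even L \<Longrightarrow> monochromatic (diamond L \<eta> m n)"
  by (auto simp: monochromatic_def diamond_def even_site_diag_site)

lemma diamond_min_size:
  assumes "0 < L"
  shows "diamond L \<eta> (min m L) (min n L) = diamond L \<eta> m n"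
proof (intro equalityI subsetI)
  fix x assume "x \<in> diamond L \<eta> (min m L) (min n L)"
  moreover have "{0..<int (min m L)} \<times> {0..<int (min n L)} \<subseteq> {0..<int m} \<times> {0..<int n}"
    by auto
  ultimately show "x \<in> diamond L \<eta> m n" unfolding diamond_def by blast
next
  fix x assume "x \<in> diamond L \<eta> m n"
  then obtain k j where x: "x = diag_site L \<eta> (k, j)" "0 \<le> k" "k < int m" "0 \<le> j" "j < int n"
    by (auto simp: diamond_def)
  have "x = diag_site L \<eta> (k mod int L, j mod int L)"
    unfolding x diag_site_eq_iff by (simp add: mod_eq_dvd_iff[symmetric] mod_add_eq mod_diff_eq)
  moreover have "k mod int L < int (min m L)" "j mod int L < int (min n L)"
    using x assms zmod_le_nonneg_dividend[of k "int L"] zmod_le_nonneg_dividend[of j "int L"]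
      pos_mod_bound[of "int L" k] pos_mod_bound[of "int L" j]
    by (auto simp: min_def)
  ultimately show "x \<in> diamond L \<eta> (min m L) (min n L)"
    using assms by (auto simp: diamond_def)
qed

lemma neighbours_wrap: "neighbours L (wrap L p) = neighbours L p"
  by (simp add: neighbours_def wrap_def mod_add_left_eq mod_diff_left_eq)

lemma neighbours_diag_site:
  "neighbours L (diag_site L \<eta> (k, j)) =
     diag_site L (fst \<eta> - 1, snd \<eta>) ` {(k + 1, j + 1), (k, j), (k + 1, j), (k, j + 1)}"
  by (simp add: diag_site_def neighbours_wrap) (simp add: neighbours_def algebra_simps)

lemma UN_unit_squares:
  fixes m n :: int
  assumes "0 < m" "0 < n"
  shows "(\<Union>(k, j)\<in>{0..<m} \<times> {0..<n}. {(k + 1, j + 1), (k, j), (k + 1, j), (k, j + 1)})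
    = {0..<m + 1} \<times> {0..<n + 1}"
proof (intro equalityI subsetI)
  fix p assume "p \<in> {0..<m + 1} \<times> {0..<n + 1}"
  then obtain a b where p: "p = (a, b)" "0 \<le> a" "a \<le> m" "0 \<le> b" "b \<le> n" by auto
  define k where "k = (if a < m then a else a - 1)"
  define j where "j = (if b < n then b else b - 1)"
  have "(k, j) \<in> {0..<m} \<times> {0..<n}" "p \<in> {(k + 1, j + 1), (k, j), (k + 1, j), (k, j + 1)}"
    using p assms by (auto simp: k_def j_def)
  then show "p \<in> (\<Union>(k, j)\<in>{0..<m} \<times> {0..<n}. {(k + 1, j + 1), (k, j), (k + 1, j), (k, j + 1)})"
    by blast
qed auto

lemma obdry_diamond:
  assumes "even L" "3 \<le> L" "0 < m" "0 < n"
  shows "obdry L (diamond L \<eta> m n) = diamond L (fst \<eta> - 1, snd \<eta>) (m + 1) (n + 1)"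
proof -
  have "obdry L (diamond L \<eta> m n) = (\<Union>x\<in>diamond L \<eta> m n. neighbours L x)"
    using assms by (intro obdry_monochromatic diamond_subset_sites monochromatic_diamond) auto
  also have "\<dots> = (\<Union>kj\<in>{0..<int m} \<times> {0..<int n}. neighbours L (diag_site L \<eta> kj))"
    by (simp add: diamond_def SUP_image comp_def)
  also have "\<dots> = diag_site L (fst \<eta> - 1, snd \<eta>) `
      (\<Union>(k, j)\<in>{0..<int m} \<times> {0..<int n}. {(k + 1, j + 1), (k, j), (k + 1, j), (k, j + 1)})"
    unfolding image_UN by (intro SUP_cong refl) (clarsimp simp: neighbours_diag_site)
  also have "\<dots> = diamond L (fst \<eta> - 1, snd \<eta>) (m + 1) (n + 1)"
    using assms by (simp add: UN_unit_squares diamond_def add.commute)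
  finally show ?thesis .
qed

lemma int_dvd_abs_less_imp_eq_0: "(d :: int) dvd x \<Longrightarrow> \<bar>x\<bar> < d \<Longrightarrow> x = 0"
  using dvd_imp_le_int[of x d] by fastforce

lemma inj_on_diag_site:
  assumes "even L" "min m n \<le> L div 2" "max m n \<le> L"
  shows "inj_on (diag_site L \<eta>) ({0..<int m} \<times> {0..<int n})"
proof (rule inj_onI)
  fix p q
  assume p: "p \<in> {0..<int m} \<times> {0..<int n}" and q: "q \<in> {0..<int m} \<times> {0..<int n}"
    and eq: "diag_site L \<eta> p = diag_site L \<eta> q"
  obtain k j k' j' where pq: "p = (k, j)" "q = (k', j')" by (cases p, cases q)
  have box: "0 \<le> k" "k < int m" "0 \<le> j" "j < int n" "0 \<le> k'" "k' < int m" "0 \<le> j'" "j' < int n"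
    using p q by (simp_all add: pq)
  have sum: "int L dvd (k + j) - (k' + j')" and diff: "int L dvd (k - j) - (k' - j')"
    using eq by (simp_all add: pq diag_site_eq_iff)
  have twice: "int L dvd 2 * (k - k')" "int L dvd 2 * (j - j')"
    using dvd_add[OF sum diff] dvd_diff[OF sum diff] by (simp_all add: algebra_simps)
  obtain h where L: "L = 2 * h" using assms(1) by (auto elim!: evenE)
  have small: "\<bar>k - k'\<bar> < int L" "\<bar>j - j'\<bar> < int L"
    using box assms(3) by linarith+
  consider "m \<le> L div 2" | "n \<le> L div 2" using assms(2) by linarith
  then show "p = q"
  proof cases
    case 1
    then have "\<bar>2 * (k - k')\<bar> < int L" using box L by simp
    then have "k = k'" using int_dvd_abs_less_imp_eq_0[OF twice(1)] by simp
    then have "int L dvd j - j'" using sum by simp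
    then have "j = j'" using int_dvd_abs_less_imp_eq_0 small(2) by fastforce
    then show ?thesis using pq \<open>k = k'\<close> by simp
  next
    case 2
    then have "\<bar>2 * (j - j')\<bar> < int L" using box L by simp
    then have "j = j'" using int_dvd_abs_less_imp_eq_0[OF twice(2)] by simp
    then have "int L dvd k - k'" using sum by simp
    then have "k = k'" using int_dvd_abs_less_imp_eq_0 small(1) by fastforce
    then show ?thesis using pq \<open>j = j'\<close> by simp
  qed
qed

lemma card_diamond_narrow:
  assumes "even L" "min m n \<le> L div 2" "max m n \<le> L"
  shows "card (diamond L \<eta> m n) = m * n"
  using card_image[OF inj_on_diag_site[OF assms]] by (simp add: diamond_def card_cartesian_product)

(* Since (k, j), (k + L/2, j + L/2) and (k + L/2, j - L/2) name the same site, the rows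
   j \<ge> L/2 of the box fold back onto the full-width rows j < n - L/2. *)
lemma diamond_wide:
  assumes "even L" "L div 2 \<le> m" "m \<le> L" "L div 2 \<le> n" "n \<le> L"
  shows "diamond L \<eta> m n = diag_site L \<eta> `
    ({0..<int L} \<times> {0..<int (n - L div 2)} \<union> {0..<int m} \<times> {int (n - L div 2)..<int (L div 2)})"
    (is "_ = diag_site L \<eta> ` (?A \<union> ?B)")
proof -
  define h where "h = int (L div 2)"
  have L: "int L = 2 * h" using assms(1) by (auto simp: h_def elim!: evenE)
  have n: "int (n - L div 2) = int n - h" using assms(4) by (simp add: h_def)
  have shift: "diag_site L \<eta> (k + h, j - h) = diag_site L \<eta> (k, j)"
    "diag_site L \<eta> (k - h, j - h) = diag_site L \<eta> (k, j)" for k j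
    using L by (simp_all add: diag_site_eq_iff)
  show ?thesis
  proof (intro equalityI subsetI)
    fix x assume "x \<in> diamond L \<eta> m n"
    then obtain k j where x: "x = diag_site L \<eta> (k, j)" "0 \<le> k" "k < int m" "0 \<le> j" "j < int n"
      by (auto simp: diamond_def)
    consider "j < h" | "h \<le> j" "k < h" | "h \<le> j" "h \<le> k" by linarith
    then show "x \<in> diag_site L \<eta> ` (?A \<union> ?B)"
    proof cases
      case 1
      then have "(k, j) \<in> ?A \<union> ?B" using x assms(3) n by (auto simp: h_def)
      then show ?thesis using x(1) by blast
    next
      case 2
      then have "(k + h, j - h) \<in> ?A" using x L n by auto
      then show ?thesis using x(1) shift(1) by (metis UnI1 image_eqI)
    next
      case 3
      then have "(k - h, j - h) \<in> ?A" using x L n assms(3) by auto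
      then show ?thesis using x(1) shift(2) by (metis UnI1 image_eqI)
    qed
  next
    fix x assume "x \<in> diag_site L \<eta> ` (?A \<union> ?B)"
    then obtain k j where x: "x = diag_site L \<eta> (k, j)" "(k, j) \<in> ?A \<union> ?B" by auto
    have "(k, j) \<in> {0..<int m} \<times> {0..<int n} \<or> (k - h, j + h) \<in> {0..<int m} \<times> {0..<int n}"
      using x(2) L n assms(2,4) by (auto simp: h_def)
    moreover have "diag_site L \<eta> (k - h, j + h) = diag_site L \<eta> (k, j)"
      using shift(1)[of "k - h" "j + h"] by simp
    ultimately show "x \<in> diamond L \<eta> m n"
      unfolding diamond_def x(1) by (metis image_eqI)
  qed
qed

lemma card_diamond_wide:
  assumes "even L" "L div 2 \<le> m" "m \<le> L" "L div 2 \<le> n" "n \<le> L"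
  shows "card (diamond L \<eta> m n) = L * (n - L div 2) + m * (L - n)"
proof -
  let ?A = "{0..<int L} \<times> {0..<int (n - L div 2)}"
  and ?B = "{0..<int m} \<times> {int (n - L div 2)..<int (L div 2)}"
  have "inj_on (diag_site L \<eta>) ({0..<int L} \<times> {0..<int (L div 2)})"
    using assms(1) by (intro inj_on_diag_site) auto
  moreover have "?A \<union> ?B \<subseteq> {0..<int L} \<times> {0..<int (L div 2)}" using assms by auto
  ultimately have "card (diamond L \<eta> m n) = card (?A \<union> ?B)"
    unfolding diamond_wide[OF assms] by (intro card_image) (rule inj_on_subset)
  also have "\<dots> = card ?A + card ?B" by (intro card_Un_disjoint) auto
  also have "\<dots> = L * (n - L div 2) + m * (L - n)"
    using assms by (auto simp: card_cartesian_product nat_diff_distrib elim!: evenE)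
  finally show ?thesis .
qed

(* The truncated subtractions make the correction vanish as soon as min m n \<le> L div 2. *)
definition diamond_area :: "nat \<Rightarrow> nat \<Rightarrow> nat \<Rightarrow> nat" where
  "diamond_area L m n = m * n - 2 * (m - L div 2) * (n - L div 2)"

lemma card_diamond:
  assumes "even L" "m \<le> L" "n \<le> L"
  shows "card (diamond L \<eta> m n) = diamond_area L m n"
proof (cases "min m n \<le> L div 2")
  case True
  then have no_overlap: "2 * (m - L div 2) * (n - L div 2) = 0" by auto
  show ?thesis
    unfolding diamond_area_def no_overlap using card_diamond_narrow[OF assms(1) True] assms by simp
next
  case False
  obtain h where L: "L = 2 * h" using assms(1) by (auto elim!: evenE)
  define a b c where "a = m - h" and "b = n - h" and "c = L - n"
  have "m = b + c + a" "n = 2 * b + c" "L = 2 * (b + c)" "L div 2 = b + c"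
    using False assms(3) L by (auto simp: a_def b_def c_def)
  then have "m * n = L * (n - L div 2) + m * (L - n) + 2 * (m - L div 2) * (n - L div 2)"
    by (simp add: algebra_simps)
  moreover have "card (diamond L \<eta> m n) = L * (n - L div 2) + m * (L - n)"
    using False assms by (intro card_diamond_wide) auto
  ultimately show ?thesis by (simp add: diamond_area_def)
qed

lemma card_diamond_min:
  assumes "even L" "0 < L"
  shows "card (diamond L \<eta> m n) = diamond_area L (min m L) (min n L)"
  using card_diamond[OF assms(1), of "min m L" "min n L" \<eta>] by (simp add: diamond_min_size[OF assms(2)])

lemma diamond_area_commute: "diamond_area L m n = diamond_area L n m"
  by (simp add: diamond_area_def ac_simps)

lemma of_nat_diamond_area:
  assumes "even L" "m \<le> L"
  shows "int (diamond_area L m n) = int m * int n - 2 * int (m - L div 2) * int (n - L div 2)"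
proof -
  have "2 * (m - L div 2) \<le> m" using assms by (auto elim!: evenE)
  then have "2 * (m - L div 2) * (n - L div 2) \<le> m * n" by (intro mult_le_mono) auto
  then show ?thesis by (simp add: diamond_area_def)
qed

lemma diamond_area_grow:
  assumes "even L" "l1 \<le> L" "l2 \<le> L"
  shows "diamond_area L (min (l1 + 1) L) (min (l2 + 1) L) = diamond_area L l1 l2 +
    (if min l1 l2 < L div 2 \<and> max l1 l2 < L then l1 + l2 + 1
     else if min l1 l2 \<ge> L div 2 \<and> max l1 l2 < L then 2 * L - (l1 + l2 + 1)
     else if min l1 l2 < L div 2 \<and> max l1 l2 = L then L
     else 0)"
  using assms
proof (induction l1 l2 rule: linorder_wlog)
  case (sym l1 l2)
  from sym(1)[OF sym(2,4,3)] show ?case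
    by (metis diamond_area_commute min.commute max.commute add.commute)
next
  case (le l1 l2)
  obtain h where L: "L = 2 * h" using \<open>even L\<close> by (auto elim!: evenE)
  have min: "min l1 l2 = l1" "max l1 l2 = l2" using le by auto
  consider "l2 < L" "l1 < h" | "l2 < L" "h \<le> l1" | "l2 = L" "l1 < h" | "l2 = L" "h \<le> l1"
    using le by linarith
  then show ?case
    using le L
    by cases (subst of_nat_eq_iff[where 'a = int, symmetric],
        simp add: min of_nat_diamond_area algebra_simps)+
qed

section \<open>Rhombi\<close>

lemma diamond_eq_Collect:
  "diamond L \<eta> m n = {wrap L (fst \<eta> + int k + int j, snd \<eta> + int k - int j) | k j. k < m \<and> j < n}"
proof -
  have "{0..<int m} \<times> {0..<int n} = map_prod int int ` ({..<m} \<times> {..<n})"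
    by (simp add: map_prod_surj_on image_int_atLeastLessThan lessThan_atLeast0)
  then have "diamond L \<eta> m n = (\<lambda>(k, j). diag_site L \<eta> (int k, int j)) ` ({..<m} \<times> {..<n})"
    by (simp add: diamond_def image_image map_prod_def split_def)
  then show ?thesis by (auto simp: diag_site_def)
qed

lemma rhombus_degenerate:
  "l1 * l2 = 0 \<Longrightarrow> rhombus L l1 l2 \<eta> = diamond L \<eta> (l1 + 1) (l2 + 1)"
  by (auto simp: rhombus_def diamond_eq_Collect less_Suc_eq_le)

lemma rhombus_nondegenerate:
  "l1 * l2 \<noteq> 0 \<Longrightarrow> rhombus L l1 l2 \<eta> = diamond L \<eta> l1 l2 \<union> obdry L (diamond L \<eta> l1 l2)"
  by (simp add: rhombus_def diamond_eq_Collect Let_def)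

lemma perimeter_rhombus:
  assumes "even L" "3 \<le> L" "l1 \<le> L" "l2 \<le> L"
  shows "perimeter L (rhombus L l1 l2 \<eta>) + 4 * diamond_area L l1 l2
    = 4 * diamond_area L (min (l1 + 1) L) (min (l2 + 1) L)"
proof -
  have L: "0 < L" using assms(2) by simp
  show ?thesis
  proof (cases "l1 * l2 = 0")
    case True
    then have "diamond_area L l1 l2 = 0" by (auto simp: diamond_area_def)
    moreover have "perimeter L (diamond L \<eta> (l1 + 1) (l2 + 1))
        = 4 * card (diamond L \<eta> (l1 + 1) (l2 + 1))"
      using assms(1,2) L by (intro perimeter_monochromatic diamond_subset_sites monochromatic_diamond)
    ultimately show ?thesis
      using card_diamond_min[OF assms(1) L] by (simp add: rhombus_degenerate[OF True])
  next
    case False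
    let ?S = "diamond L \<eta> l1 l2"
    have "perimeter L (?S \<union> obdry L ?S) + 4 * card ?S = 4 * card (obdry L ?S)"
      using assms(1,2) L by (intro perimeter_closure_monochromatic diamond_subset_sites monochromatic_diamond)
    moreover have "obdry L ?S = diamond L (fst \<eta> - 1, snd \<eta>) (l1 + 1) (l2 + 1)"
      using assms(1,2) False by (intro obdry_diamond) auto
    ultimately show ?thesis
      using card_diamond_min[OF assms(1) L] assms(3,4)
      by (simp add: rhombus_nondegenerate[OF False])
  qed
qed

theorem proposition3p3:
  fixes L l1 l2 :: nat and \<eta> :: site
  assumes "even L" and "L \<ge> 6" and "l1 \<le> L" and "l2 \<le> L"
    and "\<eta> \<in> sites L"
    and "l1 * l2 \<noteq> 0 \<Longrightarrow> odd_site \<eta>"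
    and "l1 * l2 = 0 \<Longrightarrow> even_site \<eta>"
  shows "perimeter L (rhombus L l1 l2 \<eta>) = 4 *
    (if min l1 l2 < L div 2 \<and> max l1 l2 < L then l1 + l2 + 1
     else if min l1 l2 \<ge> L div 2 \<and> max l1 l2 < L then 2 * L - (l1 + l2 + 1)
     else if min l1 l2 < L div 2 \<and> max l1 l2 = L then L
     else 0)"
  using perimeter_rhombus[of L l1 l2 \<eta>] diamond_area_grow[of L l1 l2] assms(1-4) by simp

end
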